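(* Consider a PWA system, as defined in the context, satisfying (A1)–(A6) with known global dynamical relative degree $\mu=2$. Then its inverse is given by the explicit, anticausal PWA system $x_{k+1}=\overline{\mathbf{A}}_k x_k+\overline{\mathbf{B}}_k y_{k+2}+\overline{\mathbf{F}}_k$, $u_k=\overline{\mathbf{C}}_k x_k+\overline{\mathbf{D}}_k y_{k+2}+\overline{\mathbf{G}}_k$, where $\overline{\mathbf{D}}_k=(C_{k+2}\mathbf{A}_{k+1}\mathbf{B}_k)^{-1}$, $\overline{\mathbf{C}}_k=-\overline{\mathbf{D}}_kC_{k+2}\mathbf{A}_{k+1}\mathbf{A}_k$, $\overline{\mathbf{G}}_k=-\overline{\mathbf{D}}_k(C_{k+2}\mathbf{A}_{k+1}\mathbf{F}_k+C_{k+2}\mathbf{F}_{k+1}+G_{k+2})$, $\overline{\mathbf{A}}_k=\mathbf{A}_k+\mathbf{B}_k\overline{\mathbf{C}}_k$, $\overline{\mathbf{B}}_k=\mathbf{B}_k\overline{\mathbf{D}}_k$, $\overline{\mathbf{F}}_k=\mathbf{F}_k+\mathbf{B}_k\overline{\mathbf{G}}_k$; here the location at time $k+1$ (which determines $\mathbf{A}_{k+1}$ and $\mathbf{F}_{k+1}$) does not depend on $u_k$.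
   Context: A discrete-time piecewise affine (PWA) system is $x_{k+1}=\mathbf{A}_k x_k+\mathbf{B}_k u_k+\mathbf{F}_k$, $y_k=\mathbf{C}_k x_k+\mathbf{D}_k u_k+\mathbf{G}_k$, $k\in\mathbb{Z}$, with state $x_k\in\mathbb{R}^{n_x}$, input $u_k\in\mathbb{R}^{n_u}$, output $y_k\in\mathbb{R}^{n_y}$. For each $M\in\{A,B,F,C,D,G\}$, $\mathbf{M}_k=\sum_{q=1}^{|Q|} M_{q,k}K_q(\delta_k)$, where the $M_{q,k}$ are real matrices (possibly time-varying), $\delta_k=\delta(x_k)=H(Px_k-\theta)$ with $H$ the elementwise Heaviside step function, $P\in\mathbb{R}^{n_P\times n_x}$, $\theta\in\mathbb{R}^{n_P}$, and $K_q(\delta)=1$ if $\delta\in\Delta^*_q$ and $0$ otherwise ($\Delta^*_q$ a set of binary vectors). The locations $Q_q=\{x:\delta(x)\in\Delta^*_q\}$ are disjoint, have union $\mathbb{R}^{n_x}$, and each is a union of disjoint convex polytopes. The $q$-th component model is the affine system with matrices $A_{q,k},\dots,G_{q,k}$ and relative degree $\mu_q$ (number of time steps for an input value to influence the output). Global dynamical relative degree: the smallest integer $\mu\ge 0$ such that the explicit expression of $y_{k+\mu}$ in terms of the component matrices, the selector functions $K_q$, $x_k$ and $u_i$ ($i\ge k$) contains $u_k$ outside of a selector function for every switching sequence on time steps $k,\dots,k+\mu$. Assumptions: (A1) $x_0$ lies in the set of initial conditions from which every location is reachable in finite time; (A2) single-input single-output; (A3) switching depends only on the state, not the input; (A4)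 all component models have the same relative degree $\mu_c$ for all $q$ and $k$; (A5) $\mathbf{C}_k=C_k$, $\mathbf{D}_k=D_k$, $\mathbf{G}_k=G_k$, identical for all locations and known for all $k$; (A6) output-based switching with time-invariant output function: $P=P_o\mathbf{C}_k$ and $\theta=\theta_o-P_o\mathbf{G}_k$ with $\mathbf{C}_k=C$, $\mathbf{G}_k=G$ for all $k$, where $P_o,\theta_o$ contain orientation vectors and offsets of hyperplanes in the output space. The inverse is explicit in that $u_k$ and $x_{k+1}$ are computable directly from $x_k$ and $y_{k+2}$; it is anticausal since $u_k$ depends on the future output $y_{k+2}$. *)

theory Defs
  imports "HOL-Analysis.Analysis"
begin

text \<open>Hyperplane index type 'p, location index type 'q (finite). For a location q and time k, A q k, B q k, F q k are the
component matrices (B and F are column vectors). C k is a row vector (stored as a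
vector, applied with the inner product), D k, G k are scalars.\<close>

definition heav :: "real \<Rightarrow> real" where
  "heav s = (if s \<ge> 0 then 1 else 0)"

definition delta :: "real^'n^'p \<Rightarrow> real^'p \<Rightarrow> real^'n \<Rightarrow> real^'p" where
  "delta P \<theta> x = (\<chi> i. heav ((P *v x - \<theta>) $ i))"

definition Ksel :: "('q \<Rightarrow> (real^'p) set) \<Rightarrow> 'q \<Rightarrow> real^'p \<Rightarrow> real" where
  "Ksel \<Delta> q d = (if d \<in> \<Delta> q then 1 else 0)"

text \<open>Bold PWA matrix M_k = sum_q M_{q,k} K_q(delta(x_k)), as a function of k and x_k.\<close>
definition pwa_mat :: "('q::finite \<Rightarrow> int \<Rightarrow> 'a::real_vector) \<Rightarrow> ('q \<Rightarrow> (real^'p) set)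
    \<Rightarrow> real^'n^'p \<Rightarrow> real^'p \<Rightarrow> int \<Rightarrow> real^'n \<Rightarrow> 'a" where
  "pwa_mat M \<Delta> P \<theta> k x = (\<Sum>q\<in>UNIV. Ksel \<Delta> q (delta P \<theta> x) *\<^sub>R M q k)"

definition loc_set :: "('q \<Rightarrow> (real^'p) set) \<Rightarrow> real^'n^'p \<Rightarrow> real^'p \<Rightarrow> 'q \<Rightarrow> (real^'n) set" where
  "loc_set \<Delta> P \<theta> q = {x. delta P \<theta> x \<in> \<Delta> q}"

text \<open>State trajectory of x_{k+1} = A_k x_k + B_k u_k + F_k from x_0 at time 0,
given the bold matrices as functions of time and current state; the argument n
is the time step (time int n).\<close>
primrec pwa_traj :: "(int \<Rightarrow> real^'n \<Rightarrow> real^'n^'n) \<Rightarrow> (int \<Rightarrow> real^'n \<Rightarrow> real^'n)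
    \<Rightarrow> (int \<Rightarrow> real^'n \<Rightarrow> real^'n) \<Rightarrow> real^'n \<Rightarrow> (nat \<Rightarrow> real) \<Rightarrow> nat \<Rightarrow> real^'n" where
  "pwa_traj AA BB FF x0 v 0 = x0"
| "pwa_traj AA BB FF x0 v (Suc n) =
     AA (int n) (pwa_traj AA BB FF x0 v n) *v pwa_traj AA BB FF x0 v n
     + v n *\<^sub>R BB (int n) (pwa_traj AA BB FF x0 v n) + FF (int n) (pwa_traj AA BB FF x0 v n)"

text \<open>For a switching sequence qs (qs j = location at time k+j), the vector
A_{q_{m-1},k+m-1} ... A_{q_1,k+1} B_{q_0,k} (for m \<ge> 1) multiplying u_k in x_{k+m}.\<close>
fun inpvec :: "('q \<Rightarrow> int \<Rightarrow> real^'n^'n) \<Rightarrow> ('q \<Rightarrow> int \<Rightarrow> real^'n) \<Rightarrow> int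
    \<Rightarrow> (nat \<Rightarrow> 'q) \<Rightarrow> nat \<Rightarrow> real^'n" where
  "inpvec A B k qs 0 = 0"
| "inpvec A B k qs (Suc 0) = B (qs 0) k"
| "inpvec A B k qs (Suc (Suc j)) = A (qs (Suc j)) (k + int (Suc j)) *v inpvec A B k qs (Suc j)"

text \<open>Coefficient of u_k (outside selector functions) in the explicit expression
of y_{k+m} for switching sequence qs.\<close>
definition uk_coef :: "('q \<Rightarrow> int \<Rightarrow> real^'n^'n) \<Rightarrow> ('q \<Rightarrow> int \<Rightarrow> real^'n) \<Rightarrow> (int \<Rightarrow> real^'n)
    \<Rightarrow> (int \<Rightarrow> real) \<Rightarrow> int \<Rightarrow> nat \<Rightarrow> (nat \<Rightarrow> 'q) \<Rightarrow> real" where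
  "uk_coef A B C D k m qs = (if m = 0 then D k else C (k + int m) \<bullet> inpvec A B k qs m)"

definition global_rel_deg :: "('q \<Rightarrow> int \<Rightarrow> real^'n^'n) \<Rightarrow> ('q \<Rightarrow> int \<Rightarrow> real^'n) \<Rightarrow> (int \<Rightarrow> real^'n)
    \<Rightarrow> (int \<Rightarrow> real) \<Rightarrow> nat \<Rightarrow> bool" where
  "global_rel_deg A B C D \<mu> \<longleftrightarrow>
     (\<forall>k qs. uk_coef A B C D k \<mu> qs \<noteq> 0) \<and>
     (\<forall>m<\<mu>. \<not> (\<forall>k qs. uk_coef A B C D k m qs \<noteq> 0))"

definition comp_rel_deg :: "('q \<Rightarrow> int \<Rightarrow> real^'n^'n) \<Rightarrow> ('q \<Rightarrow> int \<Rightarrow> real^'n) \<Rightarrow> (int \<Rightarrow> real^'n)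
    \<Rightarrow> (int \<Rightarrow> real) \<Rightarrow> 'q \<Rightarrow> int \<Rightarrow> nat \<Rightarrow> bool" where
  "comp_rel_deg A B C D q k \<mu> \<longleftrightarrow>
     uk_coef A B C D k \<mu> (\<lambda>_. q) \<noteq> 0 \<and> (\<forall>m<\<mu>. uk_coef A B C D k m (\<lambda>_. q) = 0)"

definition outer :: "real^'n \<Rightarrow> real^'n \<Rightarrow> real^'n^'n" where
  "outer b c = (\<chi> i j. b $ i * c $ j)"

end

theory Submission
  imports Defs
begin

text \<open>The common relative degree of the component models is forced to be the global one,
2: below 2 the coefficient of \<open>u\<^sub>k\<close> depends only on the current location, and above 2
it would vanish in \<open>y\<^sub>k\<^sub>+\<^sub>2\<close> for constant switching. Hence \<open>C\<close> annihilates every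
\<open>B q k\<close> and \<open>D = 0\<close>, while \<open>C A\<^sub>q\<^sub>' B\<^sub>q \<noteq> 0\<close> for every pair of locations. As the
switching hyperplanes are level sets of the output, moving \<open>x\<^sub>k\<^sub>+\<^sub>1\<close> along \<open>B\<^sub>k\<close> does
not change its location, which therefore does not depend on \<open>u\<^sub>k\<close>. Expanding \<open>y\<^sub>k\<^sub>+\<^sub>2\<close>
through two state updates gives an affine equation in \<open>u\<^sub>k\<close> with coefficient
\<open>C A\<^sub>k\<^sub>+\<^sub>1 B\<^sub>k \<noteq> 0\<close>; solving it and feeding \<open>u\<^sub>k\<close> back into the state equation
yields the inverse system.\<close>

lemma vector_matrix_mult_inner: "((c::real^'n) v* M) \<bullet> z = c \<bullet> (M *v z)"
  by (simp add: vector_matrix_mult_def matrix_vector_mult_def inner_vec_def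
      sum_distrib_left sum_distrib_right mult.assoc mult.left_commute)
     (rule sum.swap)

lemma outer_mult_vec: "outer b c *v z = (c \<bullet> z) *\<^sub>R (b::real^'n)"
  by (simp add: vec_eq_iff outer_def matrix_vector_mult_def inner_vec_def
      sum_distrib_left mult.commute mult.left_commute)

lemma pwa_mat_location:
  assumes "\<forall>z. \<exists>!q. delta P \<theta> z \<in> \<Delta> q" and "delta P \<theta> z \<in> \<Delta> q"
  shows "pwa_mat M \<Delta> P \<theta> k z = M q k"
proof -
  have "Ksel \<Delta> q' (delta P \<theta> z) *\<^sub>R M q' k = (if q' = q then M q k else 0)" for q'
    using assms unfolding Ksel_def by (metis scale_one scale_zero_left)
  then show ?thesis
    unfolding pwa_mat_def by simp
qed

lemma delta_translate_output_kernel: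
  assumes "P = (\<chi> i. Po $ i *\<^sub>R c)" and "c \<bullet> b = 0"
  shows "delta P \<theta> (z + b) = delta P \<theta> z"
proof -
  have "P *v b = (c \<bullet> b) *\<^sub>R Po"
    unfolding assms(1)
    by (simp add: vec_eq_iff matrix_vector_mult_def inner_vec_def sum_distrib_left mult_ac)
  with assms(2) show ?thesis
    by (simp add: delta_def matrix_vector_right_distrib)
qed

lemma uk_coef_0 [simp]: "uk_coef A B C D k 0 qs = D k"
  by (simp add: uk_coef_def)

lemma uk_coef_Suc_0 [simp]: "uk_coef A B C D k (Suc 0) qs = C (k + 1) \<bullet> B (qs 0) k"
  by (simp add: uk_coef_def)

lemma uk_coef_2 [simp]:
  "uk_coef A B C D k 2 qs = C (k + 2) \<bullet> (A (qs 1) (k + 1) *v B (qs 0) k)"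
  by (simp add: uk_coef_def numeral_2_eq_2)

lemma comp_rel_deg_le_global_rel_deg:
  assumes "global_rel_deg A B C D \<mu>" and "\<forall>q k. comp_rel_deg A B C D q k \<mu>c"
  shows "\<mu>c \<le> \<mu>"
proof (rule ccontr)
  assume "\<not> \<mu>c \<le> \<mu>"
  then have "uk_coef A B C D 0 \<mu> (\<lambda>_. undefined) = 0"
    using assms(2) unfolding comp_rel_deg_def by simp
  with assms(1) show False
    unfolding global_rel_deg_def by blast
qed

lemma global_rel_deg_eq_comp_rel_deg_if_less_2:
  assumes "global_rel_deg A B C D \<mu>" and "\<forall>q k. comp_rel_deg A B C D q k \<mu>c"
    and "\<mu>c < 2"
  shows "\<mu> = \<mu>c"
proof -
  have "uk_coef A B C D k \<mu>c qs \<noteq> 0" for k qs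
  proof -
    have "uk_coef A B C D k \<mu>c (\<lambda>_. qs 0) \<noteq> 0"
      using assms(2) unfolding comp_rel_deg_def by blast
    moreover from \<open>\<mu>c < 2\<close> have "\<mu>c = 0 \<or> \<mu>c = 1"
      by linarith
    ultimately show ?thesis
      by auto
  qed
  then have "\<not> \<mu>c < \<mu>"
    using assms(1) unfolding global_rel_deg_def by blast
  with comp_rel_deg_le_global_rel_deg[OF assms(1,2)] show ?thesis
    by simp
qed

lemma comp_rel_deg_eq_2:
  assumes "global_rel_deg A B C D 2" and "\<forall>q k. comp_rel_deg A B C D q k \<mu>c"
  shows "\<mu>c = 2"
  using comp_rel_deg_le_global_rel_deg[OF assms]
    global_rel_deg_eq_comp_rel_deg_if_less_2[OF assms]
  by linarith

lemma comp_rel_deg_2_no_direct_input: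
  assumes "comp_rel_deg A B C D q k 2"
  shows "D k = 0" and "C (k + 1) \<bullet> B q k = 0"
proof -
  have "uk_coef A B C D k m (\<lambda>_. q) = 0" if "m < 2" for m
    using assms that unfolding comp_rel_deg_def by blast
  from this[of 0] this[of 1] show "D k = 0" and "C (k + 1) \<bullet> B q k = 0"
    by simp_all
qed

lemma global_rel_deg_2_gain_nonzero:
  assumes "global_rel_deg A B C D 2"
  shows "C (k + 2) \<bullet> (A q1 (k + 1) *v B q0 k) \<noteq> 0"
proof -
  have "uk_coef A B C D k 2 (\<lambda>j. if j = 0 then q0 else q1) \<noteq> 0"
    using assms unfolding global_rel_deg_def by blast
  then show ?thesis
    by simp
qed

lemma relative_degree_two_input_recovery:
  fixes A0 A1 :: "real^'n^'n" and x0 x1 x2 B0 F0 B1 F1 c :: "real^'n"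
  defines "Db \<equiv> inverse (c \<bullet> (A1 *v B0))"
  assumes x1: "x1 = A0 *v x0 + u0 *\<^sub>R B0 + F0"
    and x2: "x2 = A1 *v x1 + u1 *\<^sub>R B1 + F1"
    and "c \<bullet> B1 = 0" and "c \<bullet> (A1 *v B0) \<noteq> 0"
  shows "u0 = (- Db *\<^sub>R (c v* (A1 ** A0))) \<bullet> x0 + Db * (c \<bullet> x2 + g)
      + - Db * (c \<bullet> (A1 *v F0) + c \<bullet> F1 + g)"
proof -
  have "c \<bullet> x2 + g = c \<bullet> (A1 *v (A0 *v x0)) + u0 * (c \<bullet> (A1 *v B0))
      + (c \<bullet> (A1 *v F0) + c \<bullet> F1 + g)"
    using \<open>c \<bullet> B1 = 0\<close> unfolding x2 x1
    by (simp add: inner_add_right matrix_vector_right_distrib matrix_vector_mult_scaleR)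
  with \<open>c \<bullet> (A1 *v B0) \<noteq> 0\<close> show ?thesis
    unfolding Db_def
    by (simp add: vector_matrix_mult_inner matrix_vector_mul_assoc[symmetric] field_simps)
qed

lemma affine_state_update_under_feedback:
  fixes A0 :: "real^'n^'n" and Cb x0 B0 F0 :: "real^'n"
  assumes "x1 = A0 *v x0 + u0 *\<^sub>R B0 + F0" and "u0 = Cb \<bullet> x0 + Db * y + Gb"
  shows "x1 = (A0 + outer B0 Cb) *v x0 + y *\<^sub>R (Db *\<^sub>R B0) + (F0 + Gb *\<^sub>R B0)"
  using assms
  by (simp add: matrix_vector_mult_add_rdistrib outer_mult_vec algebra_simps)

theorem corollary2:
  fixes A :: "'q::finite \<Rightarrow> int \<Rightarrow> real^'n::finite^'n"
    and B F :: "'q \<Rightarrow> int \<Rightarrow> real^'n"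
    and C :: "int \<Rightarrow> real^'n" and D G :: "int \<Rightarrow> real"
    and \<Delta> :: "'q \<Rightarrow> (real^'p::finite) set"
    and P :: "real^'n^'p" and \<theta> :: "real^'p"
    and Po \<theta>o :: "real^'p" and Cc :: "real^'n" and Gc :: real
    and x :: "int \<Rightarrow> real^'n" and u y :: "int \<Rightarrow> real"
  assumes binary: "\<forall>q. \<Delta> q \<subseteq> {d. \<forall>i. d $ i = 0 \<or> d $ i = 1}"
    and partition: "\<forall>z. \<exists>!q. delta P \<theta> z \<in> \<Delta> q"
    and A1: "\<forall>q. \<exists>v N. pwa_traj (pwa_mat A \<Delta> P \<theta>) (pwa_mat B \<Delta> P \<theta>) (pwa_mat F \<Delta> P \<theta>)
                          (x 0) v N \<in> loc_set \<Delta> P \<theta> q"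
    and A4: "\<exists>\<mu>c. \<forall>q k. comp_rel_deg A B C D q k \<mu>c"
    and A6_C: "\<forall>k. C k = Cc" and A6_G: "\<forall>k. G k = Gc"
    and A6_P: "P = (\<chi> i. Po $ i *\<^sub>R Cc)" and A6_theta: "\<theta> = \<theta>o - Gc *\<^sub>R Po"
    and rel_deg: "global_rel_deg A B C D 2"
    and state_eq: "\<forall>k. x (k + 1) = pwa_mat A \<Delta> P \<theta> k (x k) *v x k
                         + u k *\<^sub>R pwa_mat B \<Delta> P \<theta> k (x k) + pwa_mat F \<Delta> P \<theta> k (x k)"
    and output_eq: "\<forall>k. y k = C k \<bullet> x k + D k * u k + G k"
  shows "\<forall>k. let A0 = pwa_mat A \<Delta> P \<theta> k (x k); B0 = pwa_mat B \<Delta> P \<theta> k (x k);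
                 F0 = pwa_mat F \<Delta> P \<theta> k (x k);
                 A1 = pwa_mat A \<Delta> P \<theta> (k + 1) (x (k + 1));
                 F1 = pwa_mat F \<Delta> P \<theta> (k + 1) (x (k + 1));
                 Db = inverse (C (k + 2) \<bullet> (A1 *v B0));
                 Cb = - Db *\<^sub>R (C (k + 2) v* (A1 ** A0));
                 Gb = - Db * (C (k + 2) \<bullet> (A1 *v F0) + C (k + 2) \<bullet> F1 + G (k + 2));
                 Ab = A0 + outer B0 Cb;
                 Bb = Db *\<^sub>R B0;
                 Fb = F0 + Gb *\<^sub>R B0
             in C (k + 2) \<bullet> (A1 *v B0) \<noteq> 0
                \<and> (\<forall>v. delta P \<theta> (x (k + 1)) = delta P \<theta> (A0 *v x k + v *\<^sub>R B0 + F0))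
                \<and> x (k + 1) = Ab *v x k + y (k + 2) *\<^sub>R Bb + Fb
                \<and> u k = Cb \<bullet> x k + Db * y (k + 2) + Gb"
proof (rule allI, unfold Let_def, goal_cases)
  case (1 k)
  obtain \<mu>c where comp: "\<forall>q k. comp_rel_deg A B C D q k \<mu>c"
    using A4 by blast
  with rel_deg have "\<mu>c = 2"
    by (rule comp_rel_deg_eq_2)
  with comp have C_B_zero: "Cc \<bullet> B q j = 0" and D_zero: "D j = 0" for q j
    using comp_rel_deg_2_no_direct_input[of A B C D q j] A6_C by simp_all
  obtain q0 q1 where q0: "delta P \<theta> (x k) \<in> \<Delta> q0" and q1: "delta P \<theta> (x (k + 1)) \<in> \<Delta> q1"
    using partition by metis
  note at_q0 = pwa_mat_location[OF partition q0, where M = A]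
    pwa_mat_location[OF partition q0, where M = B] pwa_mat_location[OF partition q0, where M = F]
  note at_q1 = pwa_mat_location[OF partition q1, where M = A]
    pwa_mat_location[OF partition q1, where M = B] pwa_mat_location[OF partition q1, where M = F]
  define c where "c = C (k + 2)"
  define Db where "Db = inverse (c \<bullet> (A q1 (k + 1) *v B q0 k))"
  define Cb where "Cb = - Db *\<^sub>R (c v* (A q1 (k + 1) ** A q0 k))"
  define Gb where "Gb = - Db * (c \<bullet> (A q1 (k + 1) *v F q0 k) + c \<bullet> F q1 (k + 1) + G (k + 2))"
  have gain: "c \<bullet> (A q1 (k + 1) *v B q0 k) \<noteq> 0"
    unfolding c_def using rel_deg by (rule global_rel_deg_2_gain_nonzero)
  have x1: "x (k + 1) = A q0 k *v x k + u k *\<^sub>R B q0 k + F q0 k"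
    using state_eq at_q0 by simp
  have x2: "x (k + 2) = A q1 (k + 1) *v x (k + 1) + u (k + 1) *\<^sub>R B q1 (k + 1) + F q1 (k + 1)"
    using state_eq[rule_format, of "k + 1"] at_q1 by (simp add: add.assoc)
  have y2: "y (k + 2) = c \<bullet> x (k + 2) + G (k + 2)"
    using output_eq D_zero A6_C unfolding c_def by simp
  have "c \<bullet> B q1 (k + 1) = 0"
    using C_B_zero A6_C unfolding c_def by simp
  from relative_degree_two_input_recovery[OF x1 x2 this gain, of "G (k + 2)"]
  have input: "u k = Cb \<bullet> x k + Db * y (k + 2) + Gb"
    unfolding Cb_def Db_def Gb_def y2 .
  have "delta P \<theta> (A q0 k *v x k + v *\<^sub>R B q0 k + F q0 k) = delta P \<theta> (A q0 k *v x k + F q0 k)" for v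
    using delta_translate_output_kernel[OF A6_P, of "v *\<^sub>R B q0 k" \<theta> "A q0 k *v x k + F q0 k"] C_B_zero
    by (simp add: add_ac)
  then have "delta P \<theta> (x (k + 1)) = delta P \<theta> (A q0 k *v x k + v *\<^sub>R B q0 k + F q0 k)" for v
    unfolding x1 by metis
  with gain input affine_state_update_under_feedback[OF x1 input] show ?case
    unfolding at_q0 at_q1 c_def[symmetric] Db_def[symmetric] Cb_def[symmetric] Gb_def[symmetric]
    by blast
qed

end
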